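(* For every $\lambda = ma+nb \in \Lambda^{2,2}_{+}$ (with $m,n\in\mathbb{N}$), the Frobenius complex $\mathcal{F}(\lambda;\Lambda^{2,2})$ is homotopy equivalent to the sphere $S^{m+n-2}$ (where $S^{-1}$ is the empty space).
   Context: $\mathbb{N}=\{0,1,2,\dots\}$. For an additive commutative monoid $\Lambda$ that is cancellative and has no non-trivial invertible elements, define the partial order $\lambda \le \mu$ iff there is $\nu\in\Lambda$ with $\lambda+\nu=\mu$; $\lambda<\mu$ means $\lambda\le\mu$ and $\lambda\neq\mu$. Let $\Lambda_+=\Lambda\setminus\{0\}$. For a poset $P$, $|P|$ denotes the geometric realization of its order complex, and $(x,y)_P=\{z\in P: x<z<y\}$. The Frobenius complex is $\mathcal{F}(\lambda;\Lambda)=|(0,\lambda)_\Lambda|$ for $\lambda\in\Lambda_+$. $\Lambda^{2,2}=\langle a,b\mid 2a=2b\rangle$ is the quotient of the free commutative monoid $\mathbb{N}a\oplus\mathbb{N}b$ by the congruence generated by $\lambda+2a\sim\lambda+2b$ ($\lambda\in\mathbb{N}a\oplus\mathbb{N}b$). *)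

theory Defs
  imports "HOL-Analysis.Analysis"
begin

text \<open>Elements of the free commutative monoid N a + N b are pairs (m,n) = m a + n b.
  The congruence generated by lambda + 2a ~ lambda + 2b.\<close>

inductive cong22 :: "nat \<times> nat \<Rightarrow> nat \<times> nat \<Rightarrow> bool" where
  gen: "cong22 (m + 2, n) (m, n + 2)"
| refl: "cong22 x x"
| sym: "cong22 x y \<Longrightarrow> cong22 y x"
| trans: "cong22 x y \<Longrightarrow> cong22 y z \<Longrightarrow> cong22 x z"
| add: "cong22 x y \<Longrightarrow> cong22 (fst x + fst z, snd x + snd z) (fst y + fst z, snd y + snd z)"

lemma equivp_cong22: "equivp cong22"
  by (intro equivpI reflpI sympI transpI) (auto intro: cong22.intros)

quotient_type lam22 = "nat \<times> nat" / cong22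
  by (rule equivp_cong22)

lift_definition gen22 :: "nat \<Rightarrow> nat \<Rightarrow> lam22" is "\<lambda>m n. (m, n)" .

lift_definition add22 :: "lam22 \<Rightarrow> lam22 \<Rightarrow> lam22"
  is "\<lambda>x y. (fst x + fst y, snd x + snd y)"
proof -
  fix x x' y y' :: "nat \<times> nat"
  assume h1: "cong22 x x'" and h2: "cong22 y y'"
  have "cong22 (fst x + fst y, snd x + snd y) (fst x' + fst y, snd x' + snd y)"
    using cong22.add[OF h1] .
  moreover have "cong22 (fst y + fst x', snd y + snd x') (fst y' + fst x', snd y' + snd x')"
    using cong22.add[OF h2] .
  hence "cong22 (fst x' + fst y, snd x' + snd y) (fst x' + fst y', snd x' + snd y')"
    by (simp add: add.commute)
  ultimately show "cong22 (fst x + fst y, snd x + snd y) (fst x' + fst y', snd x' + snd y')"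
    by (rule cong22.trans)
qed

definition zero22 :: lam22 where "zero22 = gen22 0 0"

definition le22 :: "lam22 \<Rightarrow> lam22 \<Rightarrow> bool" where
  "le22 x y \<longleftrightarrow> (\<exists>z. add22 x z = y)"

definition less22 :: "lam22 \<Rightarrow> lam22 \<Rightarrow> bool" where
  "less22 x y \<longleftrightarrow> le22 x y \<and> x \<noteq> y"

definition open_interval22 :: "lam22 \<Rightarrow> lam22 \<Rightarrow> lam22 set" where
  "open_interval22 x y = {z. less22 x z \<and> less22 z y}"

text \<open>For a poset (P, le), the geometric realization of its order complex (simplices = nonempty
  finite chains) as the set of finitely supported convex weight functions on P whose support is
  a chain, with the subspace topology of the product topology on 'a \<Rightarrow> real. For finite P (the
  only case used) this is the usual realization of a finite simplicial complex.\<close>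
definition order_complex_realization :: "('a \<Rightarrow> 'a \<Rightarrow> bool) \<Rightarrow> 'a set \<Rightarrow> ('a \<Rightarrow> real) topology" where
  "order_complex_realization le P =
     subtopology (powertop_real UNIV)
       {f. (\<forall>x. 0 \<le> f x) \<and> (\<forall>x. x \<notin> P \<longrightarrow> f x = 0) \<and> finite {x. f x \<noteq> 0}
           \<and> sum f {x. f x \<noteq> 0} = 1
           \<and> (\<forall>x y. f x \<noteq> 0 \<longrightarrow> f y \<noteq> 0 \<longrightarrow> le x y \<or> le y x)}"

definition frobenius_complex22 :: "lam22 \<Rightarrow> (lam22 \<Rightarrow> real) topology" where
  "frobenius_complex22 l = order_complex_realization le22 (open_interval22 zero22 l)"

definition sphere_space :: "int \<Rightarrow> (nat \<Rightarrow> real) topology" where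
  "sphere_space d = (if d < 0 then subtopology (powertop_real UNIV) {} else nsphere (nat d))"

end

theory Submission
  imports Defs
begin

text \<open>An element of the monoid is determined by its degree \<open>m + n\<close> and the parity of \<open>m\<close>, and
  \<open>\<lambda> < \<mu>\<close> holds exactly when \<open>\<lambda>\<close> has smaller degree. Hence \<open>(0, \<lambda>)\<close> is the ordinal sum of
  \<open>k = deg \<lambda> - 1\<close> two-element antichains \<open>{(j + 1) b, a + j b}\<close>, and its order complex is the
  boundary of the \<open>k\<close>-dimensional cross-polytope: barycentric weights on the vertices \<open>\<plusminus>e\<^sub>j\<close>
  never charging both \<open>e\<^sub>j\<close> and \<open>-e\<^sub>j\<close>. Sending such a weight to the vector of differences
  \<open>w(e\<^sub>j) - w(-e\<^sub>j)\<close> and rescaling from the \<open>\<ell>\<^sup>1\<close>- to the \<open>\<ell>\<^sup>2\<close>-unit sphere is a homeomorphism onto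
  the \<open>(k - 1)\<close>-sphere, whose inverse reads off the signs of the coordinates.\<close>

lemma topspace_nsphere_iff:
  "h \<in> topspace (nsphere d) \<longleftrightarrow> (\<Sum>j<Suc d. h j ^ 2) = 1 \<and> (\<forall>i\<ge>Suc d. h i = 0)"
  by (simp add: nsphere lessThan_Suc_atMost Suc_le_eq del: sum.lessThan_Suc)

lemma sum_abs_pos_of_sum_square_eq_1:
  fixes h :: "nat \<Rightarrow> real"
  assumes "(\<Sum>j<k. h j ^ 2) = 1"
  shows "0 < (\<Sum>j<k. \<bar>h j\<bar>)"
proof -
  have "(\<Sum>j<k. \<bar>h j\<bar>) \<noteq> 0"
  proof
    assume "(\<Sum>j<k. \<bar>h j\<bar>) = 0"
    then have "\<forall>j\<in>{..<k}. h j = 0" by (simp add: sum_nonneg_eq_0_iff)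
    then show False using assms by simp
  qed
  then show ?thesis by (simp add: less_le sum_nonneg)
qed

text \<open>\<open>pos j\<close> and \<open>neg j\<close> stand for the vertices \<open>e\<^sub>j\<close> and \<open>-e\<^sub>j\<close> of the cross-polytope.\<close>

locale cross_polytope =
  fixes pos neg :: "nat \<Rightarrow> 'a"
  assumes inj_pos: "inj pos" and inj_neg: "inj neg" and pos_neq_neg: "pos i \<noteq> neg j"
begin

definition vertices :: "nat \<Rightarrow> 'a set" where
  "vertices k = pos ` {..<k} \<union> neg ` {..<k}"

definition boundary :: "nat \<Rightarrow> ('a \<Rightarrow> real) set" where
  "boundary k = {f. (\<forall>x. 0 \<le> f x) \<and> (\<forall>x. x \<notin> vertices k \<longrightarrow> f x = 0)
                  \<and> (\<forall>j. f (pos j) = 0 \<or> f (neg j) = 0) \<and> (\<Sum>j<k. f (pos j) + f (neg j)) = 1}"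

lemma sum_support_vertices:
  assumes "\<And>x. x \<notin> vertices k \<Longrightarrow> f x = 0"
  shows "finite {x. f x \<noteq> 0}" and "sum f {x. f x \<noteq> 0} = (\<Sum>j<k. f (pos j) + f (neg j))"
proof -
  have sub: "{x. f x \<noteq> 0} \<subseteq> vertices k" using assms by blast
  have fin: "finite (vertices k)" by (simp add: vertices_def)
  then show "finite {x. f x \<noteq> 0}" using sub finite_subset by blast
  have "sum f {x. f x \<noteq> 0} = sum f (vertices k)"
    by (rule sum.mono_neutral_left[OF fin sub]) auto
  also have "\<dots> = sum f (pos ` {..<k}) + sum f (neg ` {..<k})"
    unfolding vertices_def by (rule sum.union_disjoint) (auto simp: pos_neq_neg)
  also have "\<dots> = (\<Sum>j<k. f (pos j) + f (neg j))"
    using inj_pos inj_neg by (simp add: sum.reindex inj_on_def sum.distrib)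
  finally show "sum f {x. f x \<noteq> 0} = (\<Sum>j<k. f (pos j) + f (neg j))" .
qed

lemma order_complex_realization_eq_boundary:
  assumes comparable: "\<And>x y. x \<in> vertices k \<Longrightarrow> y \<in> vertices k \<Longrightarrow>
                         le x y \<or> le y x \<longleftrightarrow> (\<forall>j. {x, y} \<noteq> {pos j, neg j})"
  shows "order_complex_realization le (vertices k) = subtopology (powertop_real UNIV) (boundary k)"
proof -
  have "(\<forall>x y. f x \<noteq> 0 \<longrightarrow> f y \<noteq> 0 \<longrightarrow> le x y \<or> le y x)
          \<longleftrightarrow> (\<forall>j. f (pos j) = 0 \<or> f (neg j) = 0)"
    if supp: "\<And>x. x \<notin> vertices k \<Longrightarrow> f x = 0" for f :: "'a \<Rightarrow> real"
  proof
    assume chain: "\<forall>x y. f x \<noteq> 0 \<longrightarrow> f y \<noteq> 0 \<longrightarrow> le x y \<or> le y x"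
    show "\<forall>j. f (pos j) = 0 \<or> f (neg j) = 0"
    proof (rule ccontr)
      assume "\<not> (\<forall>j. f (pos j) = 0 \<or> f (neg j) = 0)"
      then obtain j where "f (pos j) \<noteq> 0" "f (neg j) \<noteq> 0" by blast
      with chain supp comparable[of "pos j" "neg j"] show False by blast
    qed
  next
    assume "\<forall>j. f (pos j) = 0 \<or> f (neg j) = 0"
    then show "\<forall>x y. f x \<noteq> 0 \<longrightarrow> f y \<noteq> 0 \<longrightarrow> le x y \<or> le y x"
      using supp comparable by (metis doubleton_eq_iff)
  qed
  moreover have "finite {x. f x \<noteq> 0} \<and> sum f {x. f x \<noteq> 0} = 1
                  \<longleftrightarrow> (\<Sum>j<k. f (pos j) + f (neg j)) = 1"
    if "\<And>x. x \<notin> vertices k \<Longrightarrow> f x = 0" for f :: "'a \<Rightarrow> real"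
    using sum_support_vertices[OF that] by simp
  ultimately show ?thesis
    unfolding order_complex_realization_def boundary_def
    by (intro arg_cong[where f = "subtopology _"] Collect_cong) blast
qed

lemma boundary_0: "boundary 0 = {}"
  by (simp add: boundary_def)

lemma boundary_abs_diff:
  assumes "f \<in> boundary k"
  shows "\<bar>f (pos j) - f (neg j)\<bar> = f (pos j) + f (neg j)"
proof -
  have "f (pos j) = 0 \<or> f (neg j) = 0" "0 \<le> f (pos j)" "0 \<le> f (neg j)"
    using assms by (auto simp: boundary_def)
  then show ?thesis by auto
qed

lemma boundary_sum_abs_diff:
  assumes "f \<in> boundary k"
  shows "(\<Sum>j<k. \<bar>f (pos j) - f (neg j)\<bar>) = 1"
  using assms by (simp add: boundary_abs_diff) (simp add: boundary_def)

lemma boundary_sum_square_diff_pos: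
  assumes "f \<in> boundary k"
  shows "0 < (\<Sum>j<k. (f (pos j) - f (neg j))^2)"
proof -
  have "(\<Sum>j<k. (f (pos j) - f (neg j))^2) \<noteq> 0"
  proof
    assume "(\<Sum>j<k. (f (pos j) - f (neg j))^2) = 0"
    then have "\<forall>j\<in>{..<k}. f (pos j) - f (neg j) = 0" by (simp add: sum_nonneg_eq_0_iff)
    then show False using boundary_sum_abs_diff[OF assms] by simp
  qed
  then show ?thesis by (simp add: less_le sum_nonneg)
qed

definition to_sphere :: "nat \<Rightarrow> ('a \<Rightarrow> real) \<Rightarrow> nat \<Rightarrow> real" where
  "to_sphere k f i =
     (if i < k then (f (pos i) - f (neg i)) / sqrt (\<Sum>j<k. (f (pos j) - f (neg j))^2) else 0)"

definition from_sphere :: "nat \<Rightarrow> (nat \<Rightarrow> real) \<Rightarrow> 'a \<Rightarrow> real" where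
  "from_sphere k h x =
     (if x \<in> pos ` {..<k} then max (h (inv pos x)) 0
      else if x \<in> neg ` {..<k} then max (- h (inv neg x)) 0 else 0) / (\<Sum>j<k. \<bar>h j\<bar>)"

lemma from_sphere_pos: "j < k \<Longrightarrow> from_sphere k h (pos j) = max (h j) 0 / (\<Sum>j<k. \<bar>h j\<bar>)"
  by (simp add: from_sphere_def inv_f_f[OF inj_pos])

lemma from_sphere_neg: "j < k \<Longrightarrow> from_sphere k h (neg j) = max (- h j) 0 / (\<Sum>j<k. \<bar>h j\<bar>)"
  by (auto simp: from_sphere_def inv_f_f[OF inj_neg] pos_neq_neg[symmetric])

lemma sum_square_to_sphere:
  assumes "f \<in> boundary k"
  shows "(\<Sum>i<k. to_sphere k f i ^ 2) = 1"
proof -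
  define D where "D = (\<Sum>j<k. (f (pos j) - f (neg j))^2)"
  have D: "0 < D" using boundary_sum_square_diff_pos[OF assms] by (simp add: D_def)
  have "(\<Sum>i<k. to_sphere k f i ^ 2) = (\<Sum>i<k. (f (pos i) - f (neg i))^2 / D)"
    by (intro sum.cong) (use D in \<open>auto simp: to_sphere_def D_def[symmetric] power_divide\<close>)
  also have "\<dots> = 1" using D by (simp add: sum_divide_distrib[symmetric] D_def)
  finally show ?thesis .
qed

lemma to_sphere_in_nsphere:
  "f \<in> boundary (Suc d) \<Longrightarrow> to_sphere (Suc d) f \<in> topspace (nsphere d)"
  using sum_square_to_sphere[of f "Suc d"] by (simp add: topspace_nsphere_iff to_sphere_def)

lemma sum_from_sphere:
  assumes s: "0 < (\<Sum>j<k. \<bar>h j\<bar>)"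
  shows "(\<Sum>j<k. from_sphere k h (pos j) + from_sphere k h (neg j)) = 1"
proof -
  have "(\<Sum>j<k. from_sphere k h (pos j) + from_sphere k h (neg j))
          = (\<Sum>j<k. \<bar>h j\<bar> / (\<Sum>j<k. \<bar>h j\<bar>))"
    by (intro sum.cong) (auto simp: from_sphere_pos from_sphere_neg add_divide_distrib[symmetric])
  also have "\<dots> = 1" using s by (simp add: sum_divide_distrib[symmetric])
  finally show ?thesis .
qed

lemma from_sphere_in_boundary:
  assumes "0 < (\<Sum>j<k. \<bar>h j\<bar>)"
  shows "from_sphere k h \<in> boundary k"
proof -
  have nonneg: "0 \<le> from_sphere k h x" for x
    using assms by (simp add: from_sphere_def)
  have outside: "from_sphere k h x = 0" if "x \<notin> vertices k" for x
    using that by (simp add: from_sphere_def vertices_def)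
  have exclusive: "from_sphere k h (pos j) = 0 \<or> from_sphere k h (neg j) = 0" for j
  proof (cases "j < k")
    case True
    then show ?thesis by (simp add: from_sphere_pos from_sphere_neg max_def)
  next
    case False
    then have "pos j \<notin> vertices k"
      using inj_pos by (auto simp: vertices_def pos_neq_neg inj_eq)
    then show ?thesis using outside by blast
  qed
  show ?thesis
    unfolding boundary_def mem_Collect_eq
    using sum_from_sphere[OF assms] nonneg outside exclusive by (intro conjI allI impI) auto
qed

lemma boundary_eq_max_diff:
  assumes "f \<in> boundary k"
  shows "f (pos j) = max (f (pos j) - f (neg j)) 0" and "f (neg j) = max (f (neg j) - f (pos j)) 0"
proof -
  have "f (pos j) = 0 \<or> f (neg j) = 0" "0 \<le> f (pos j)" "0 \<le> f (neg j)"
    using assms by (auto simp: boundary_def)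
  then show "f (pos j) = max (f (pos j) - f (neg j)) 0" "f (neg j) = max (f (neg j) - f (pos j)) 0"
    by auto
qed

lemma from_to_sphere:
  assumes f: "f \<in> boundary k"
  shows "from_sphere k (to_sphere k f) = f"
proof
  fix x
  define c where "c = sqrt (\<Sum>j<k. (f (pos j) - f (neg j))^2)"
  have c: "0 < c" using boundary_sum_square_diff_pos[OF f] by (simp add: c_def)
  have to_eq: "to_sphere k f j = (f (pos j) - f (neg j)) / c" if "j < k" for j
    using that by (simp add: to_sphere_def c_def)
  have "(\<Sum>j<k. \<bar>to_sphere k f j\<bar>) = (\<Sum>j<k. \<bar>f (pos j) - f (neg j)\<bar>) / c"
    using c by (simp add: to_eq sum_divide_distrib)
  then have norm: "(\<Sum>j<k. \<bar>to_sphere k f j\<bar>) = 1 / c"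
    by (simp add: boundary_sum_abs_diff[OF f])
  have rescale: "max (a / c) 0 * c = max a 0" for a
    using c by (auto simp: max_def divide_le_0_iff)
  consider j where "j < k" "x = pos j" | j where "j < k" "x = neg j" | "x \<notin> vertices k"
    unfolding vertices_def by blast
  then show "from_sphere k (to_sphere k f) x = f x"
  proof cases
    case 1
    then have "from_sphere k (to_sphere k f) x = max (to_sphere k f j) 0 * c"
      by (simp add: from_sphere_pos norm)
    then show ?thesis
      using 1 boundary_eq_max_diff(1)[OF f, of j] by (simp add: to_eq rescale)
  next
    case 2
    then have "from_sphere k (to_sphere k f) x = max (- to_sphere k f j) 0 * c"
      by (simp add: from_sphere_neg norm)
    then show ?thesis
      using 2 boundary_eq_max_diff(2)[OF f, of j] rescale[of "f (neg j) - f (pos j)"]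
      by (simp add: to_eq minus_divide_left)
  next
    case 3
    then show ?thesis
      using f by (simp add: from_sphere_def vertices_def boundary_def)
  qed
qed

lemma to_from_sphere:
  assumes unit: "(\<Sum>j<k. h j ^ 2) = 1" and vanish: "\<And>i. k \<le> i \<Longrightarrow> h i = 0"
  shows "to_sphere k (from_sphere k h) = h"
proof
  fix i
  define s where "s = (\<Sum>j<k. \<bar>h j\<bar>)"
  have s: "0 < s" using sum_abs_pos_of_sum_square_eq_1[OF unit] by (simp add: s_def)
  have diff: "from_sphere k h (pos j) - from_sphere k h (neg j) = h j / s" if "j < k" for j
    using that
    by (simp add: from_sphere_pos from_sphere_neg s_def[symmetric] diff_divide_distrib[symmetric] max_def)
  have "(\<Sum>j<k. (from_sphere k h (pos j) - from_sphere k h (neg j))^2)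
          = (\<Sum>j<k. h j ^ 2) / s^2"
    by (simp add: diff power_divide sum_divide_distrib)
  then have "sqrt (\<Sum>j<k. (from_sphere k h (pos j) - from_sphere k h (neg j))^2) = 1 / s"
    using s by (simp add: unit real_sqrt_divide)
  then show "to_sphere k (from_sphere k h) i = h i"
    using s vanish by (auto simp: to_sphere_def diff)
qed

lemma continuous_map_to_sphere:
  "continuous_map (subtopology (powertop_real UNIV) (boundary k)) (powertop_real UNIV) (to_sphere k)"
  unfolding continuous_map_componentwise_UNIV to_sphere_def
  by (auto intro!: continuous_intros) (fastforce dest: boundary_sum_square_diff_pos)

lemma continuous_map_from_sphere:
  "continuous_map (subtopology (powertop_real UNIV) {h. (\<Sum>j<k. h j ^ 2) = 1}) (powertop_real UNIV)
     (from_sphere k)"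
  unfolding continuous_map_componentwise_UNIV from_sphere_def
  by (auto intro!: continuous_intros) (fastforce dest: sum_abs_pos_of_sum_square_eq_1)

theorem homeomorphic_boundary_nsphere:
  "subtopology (powertop_real UNIV) (boundary (Suc d)) homeomorphic_space nsphere d"
proof -
  have cont_to:
    "continuous_map (subtopology (powertop_real UNIV) (boundary (Suc d))) (nsphere d) (to_sphere (Suc d))"
    using continuous_map_to_sphere to_sphere_in_nsphere
    by (auto simp: nsphere continuous_map_in_subtopology)
  have "continuous_map (nsphere d) (powertop_real UNIV) (from_sphere (Suc d))"
    using continuous_map_from_sphere unfolding nsphere
    by (rule continuous_map_from_subtopology_mono) (auto simp: lessThan_Suc_atMost)
  then have cont_from:
    "continuous_map (nsphere d) (subtopology (powertop_real UNIV) (boundary (Suc d))) (from_sphere (Suc d))"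
    using from_sphere_in_boundary sum_abs_pos_of_sum_square_eq_1
    by (auto simp: continuous_map_in_subtopology topspace_nsphere_iff simp del: sum.lessThan_Suc)
  show ?thesis
    unfolding homeomorphic_space_def homeomorphic_maps_def
    using cont_to cont_from from_to_sphere to_from_sphere
    by (intro exI[of _ "to_sphere (Suc d)"] exI[of _ "from_sphere (Suc d)"])
      (auto simp: topspace_nsphere_iff)
qed

end

lemma cong22_imp_deg_parity:
  "cong22 x y \<Longrightarrow> fst x + snd x = fst y + snd y \<and> (odd (fst x) \<longleftrightarrow> odd (fst y))"
  by (induction rule: cong22.induct) auto

lemma cong22_shift: "cong22 (m + 2 * j, n) (m, n + 2 * j)"
proof (induction j arbitrary: m)
  case 0
  show ?case by (simp add: cong22.refl)
next
  case (Suc j)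
  have "cong22 (m + 2 + 2 * j, n) (m + 2, n + 2 * j)" using Suc.IH[of "m + 2"] by simp
  moreover have "cong22 (m + 2, n + 2 * j) (m, n + 2 * j + 2)" by (rule cong22.gen)
  ultimately show ?case by (auto intro: cong22.trans simp: algebra_simps)
qed

lemma cong22_iff: "cong22 (m, n) (m', n') \<longleftrightarrow> m + n = m' + n' \<and> (odd m \<longleftrightarrow> odd m')"
proof
  assume "cong22 (m, n) (m', n')"
  then show "m + n = m' + n' \<and> (odd m \<longleftrightarrow> odd m')" using cong22_imp_deg_parity by fastforce
next
  assume h: "m + n = m' + n' \<and> (odd m \<longleftrightarrow> odd m')"
  have shift: "cong22 (m, n) (m', n')" if "m' \<le> m" "m + n = m' + n'" "odd m \<longleftrightarrow> odd m'" for m n m' n'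
  proof -
    have "\<exists>j. m = m' + 2 * j" using that by presburger
    then obtain j where "m = m' + 2 * j" ..
    then show ?thesis using that cong22_shift[of m' j n] by (simp add: add.commute)
  qed
  show "cong22 (m, n) (m', n')"
    using shift[of m' m n n'] shift[of m m' n' n] h by (cases "m' \<le> m") (auto intro: cong22.sym)
qed

lift_definition deg22 :: "lam22 \<Rightarrow> nat" is "\<lambda>x. fst x + snd x"
  using cong22_imp_deg_parity by blast

lift_definition odd22 :: "lam22 \<Rightarrow> bool" is "\<lambda>x. odd (fst x)"
  using cong22_imp_deg_parity by blast

lemma lam22_gen22_cases: obtains m n where "x = gen22 m n"
  by transfer (metis cong22.refl prod.collapse)

lemma deg22_gen22 [simp]: "deg22 (gen22 m n) = m + n"
  by transfer simp

lemma odd22_gen22 [simp]: "odd22 (gen22 m n) = odd m"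
  by transfer simp

lemma gen22_eq_iff: "gen22 m n = gen22 m' n' \<longleftrightarrow> m + n = m' + n' \<and> (odd m \<longleftrightarrow> odd m')"
  by transfer (simp add: cong22_iff)

lemma lam22_eq_iff: "x = y \<longleftrightarrow> deg22 x = deg22 y \<and> odd22 x = odd22 y"
  by (cases x rule: lam22_gen22_cases, cases y rule: lam22_gen22_cases) (auto simp: gen22_eq_iff)

lemma add22_gen22: "add22 (gen22 m n) (gen22 p q) = gen22 (m + p) (n + q)"
  by transfer (simp add: cong22.refl)

lemma deg22_zero22 [simp]: "deg22 zero22 = 0"
  by (simp add: zero22_def)

lemma deg22_eq_0_iff: "deg22 x = 0 \<longleftrightarrow> x = zero22"
  by (cases x rule: lam22_gen22_cases) (auto simp: zero22_def gen22_eq_iff)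

lemma le22_iff_deg: "le22 x y \<longleftrightarrow> deg22 x < deg22 y \<or> x = y"
proof
  assume "le22 x y"
  then obtain z where z: "add22 x z = y" by (auto simp: le22_def)
  obtain m n where x: "x = gen22 m n" by (rule lam22_gen22_cases)
  obtain p q where "z = gen22 p q" by (rule lam22_gen22_cases)
  with x z have "y = gen22 (m + p) (n + q)" by (simp add: add22_gen22)
  with x show "deg22 x < deg22 y \<or> x = y" by (cases "p + q = 0") auto
next
  assume h: "deg22 x < deg22 y \<or> x = y"
  obtain m n where x: "x = gen22 m n" by (rule lam22_gen22_cases)
  obtain m' n' where y: "y = gen22 m' n'" by (rule lam22_gen22_cases)
  define p where "p = (if odd m = odd m' then 0 else 1::nat)"
  have "add22 x (gen22 0 0) = x" using x by (simp add: add22_gen22)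
  moreover have "add22 x (gen22 p (m' + n' - m - n - p)) = y" if "m + n < m' + n'"
    using that unfolding x y add22_gen22 gen22_eq_iff p_def by auto
  ultimately show "le22 x y" using h x y by (auto simp: le22_def)
qed

text \<open>The elements of degree \<open>i + 1\<close> are exactly \<open>(i + 1) b\<close> and \<open>a + i b\<close>.\<close>

definition pos22 :: "nat \<Rightarrow> lam22" where "pos22 i = gen22 0 (Suc i)"

definition neg22 :: "nat \<Rightarrow> lam22" where "neg22 i = gen22 1 i"

lemma deg22_pos22 [simp]: "deg22 (pos22 i) = Suc i"
  and deg22_neg22 [simp]: "deg22 (neg22 i) = Suc i"
  and odd22_pos22 [simp]: "\<not> odd22 (pos22 i)"
  and odd22_neg22 [simp]: "odd22 (neg22 i)"
  by (simp_all add: pos22_def neg22_def)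

interpretation lam22: cross_polytope pos22 neg22
  by unfold_locales (auto simp: inj_def lam22_eq_iff[of "pos22 _"] lam22_eq_iff[of "neg22 _"])

lemma mem_lam22_vertices_iff: "x \<in> lam22.vertices k \<longleftrightarrow> 0 < deg22 x \<and> deg22 x \<le> k"
proof -
  have "x = pos22 (deg22 x - 1) \<or> x = neg22 (deg22 x - 1)" if "0 < deg22 x"
    using that by (auto simp: lam22_eq_iff[of x])
  then show ?thesis by (force simp: lam22.vertices_def)
qed

lemma open_interval22_zero: "open_interval22 zero22 l = lam22.vertices (deg22 l - 1)"
  using deg22_eq_0_iff
  by (auto simp: open_interval22_def less22_def le22_iff_deg mem_lam22_vertices_iff)

lemma le22_comparable_iff:
  assumes "x \<in> lam22.vertices k" "y \<in> lam22.vertices k"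
  shows "le22 x y \<or> le22 y x \<longleftrightarrow> (\<forall>j. {x, y} \<noteq> {pos22 j, neg22 j})"
  using assms by (auto simp: le22_iff_deg mem_lam22_vertices_iff doubleton_eq_iff gr0_conv_Suc
      lam22_eq_iff[of x] lam22_eq_iff[of y])

lemma frobenius_complex22_eq_boundary:
  "frobenius_complex22 l = subtopology (powertop_real UNIV) (lam22.boundary (deg22 l - 1))"
  unfolding frobenius_complex22_def open_interval22_zero
  by (rule lam22.order_complex_realization_eq_boundary) (rule le22_comparable_iff)

theorem theorem2p8:
  fixes m n :: nat
  assumes "gen22 m n \<noteq> zero22"
  shows "frobenius_complex22 (gen22 m n) homotopy_equivalent_space
           sphere_space (int m + int n - 2)"
proof -
  have "m + n \<noteq> 0" using assms deg22_eq_0_iff[of "gen22 m n"] by simp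
  then consider "m + n = 1" | d where "m + n = Suc (Suc d)"
    by (metis One_nat_def not0_implies_Suc)
  then show ?thesis
  proof cases
    case 1
    then show ?thesis
      by (simp add: frobenius_complex22_eq_boundary lam22.boundary_0 sphere_space_def
          homeomorphic_imp_homotopy_equivalent_space homeomorphic_empty_space_eq)
  next
    case 2
    then have "int m + int n - 2 = int d" by simp
    then have "sphere_space (int m + int n - 2) = nsphere d" by (simp add: sphere_space_def)
    then show ?thesis
      using 2 lam22.homeomorphic_boundary_nsphere[of d]
      by (simp add: frobenius_complex22_eq_boundary homeomorphic_imp_homotopy_equivalent_space)
  qed
qed

end
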